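(* Suppose Assumptions A1, A2 (SDSD) and A3 hold for a given steady state $(x^s,u^s)$ and $\gamma\in(0,1)$. Then $(x^s,u^s)$ is a minimizer of the optimal steady-state problem $$\min_{x,u}\ \tilde L^\gamma(x,u)\quad\text{s.t.}\quad x=f(x,u),$$ where $\tilde L^\gamma(x,u):=L(x,u)+(\gamma-1)V_\star^\gamma(f(x,u))$.
   Context: Setting: discrete-time system $x_+=f(x,u)$ with $x\in\mathbb{R}^{n_x}$, $u\in\mathbb{R}^{n_u}$, stage cost $L(x,u)$, constraint set $\mathbb{Z}:=\{(x,u): h(x,u)\le 0\}$, with the convention $L(x,u)=\infty$ for $(x,u)\notin\mathbb{Z}$, and discount factor $\gamma\in(0,1)$. For a policy $\pi$ the closed-loop trajectory is $x_{k+1}^\pi=f(x_k^\pi,\pi(x_k^\pi))$, $x_0^\pi=x_0$. $\mathbb{X}_0:=\{x_0:\exists\pi \text{ with } h(x_k^\pi,\pi(x_k^\pi))\le0\ \forall k\ge0\}$ and $\Pi:=\{\pi: h(x_k^\pi,\pi(x_k^\pi))\le 0\ \forall x_0\in\mathbb{X}_0,\forall k\ge 0\}$. The optimal value function is $V_\star^\gamma(x_0):=\min_{\pi\in\Pi}\sum_{k=0}^\infty\gamma^kL(x_k^\pi,\pi(x_k^\pi))$ and $\pi_\star^\gamma$ denotes an optimal policy. $(x^s,u^s)$ is a steady state, $x^s=f(x^s,u^s)$, normalized so that $L(x^s,u^s)=0$. Assumption A1: $\mathbb{Z}$ and $\mathbb{X}_0$ are compact and $|L(x,u)|<\infty$ for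 all $(x,u)\in\mathbb{Z}$. Assumption A2 (Strong Discounted Strict Dissipativity, SDSD): there exist a function $\lambda$, continuous at $x^s$, bounded on bounded sets, with $\lambda(x^s)=0$, and $\rho\in\mathcal{K}$ such that for all $(x,u)\in\mathbb{Z}$: (i) $L(x,u)+\lambda(x)-\gamma\lambda(f(x,u))\ge\rho(\|x-x^s\|)$; (ii) $L(x,u)+\lambda(x)-\lambda(f(x,u))+(\gamma-1)V_\star^\gamma(f(x,u))\ge\rho(\|x-x^s\|)$. Assumption A3: $V_\star^\gamma$ is continuous at $x^s$ and bounded on $\mathbb{X}_0$. $\mathcal{K}$ denotes continuous, strictly increasing functions $\mathbb{R}_{\ge0}\to\mathbb{R}_{\ge0}$ vanishing at $0$. *)

theory Defs
  imports "HOL-Analysis.Analysis"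
begin

fun traj :: "('x \<Rightarrow> 'u \<Rightarrow> 'x) \<Rightarrow> ('x \<Rightarrow> 'u) \<Rightarrow> 'x \<Rightarrow> nat \<Rightarrow> 'x" where
  "traj f p x0 0 = x0"
| "traj f p x0 (Suc k) = f (traj f p x0 k) (p (traj f p x0 k))"

definition Zset :: "('x \<Rightarrow> 'u \<Rightarrow> real^'c) \<Rightarrow> ('x \<times> 'u) set" where
  "Zset h = {(x, u). h x u \<le> 0}"

definition X0set :: "('x \<Rightarrow> 'u \<Rightarrow> 'x) \<Rightarrow> ('x \<Rightarrow> 'u \<Rightarrow> real^'c) \<Rightarrow> 'x set" where
  "X0set f h = {x0. \<exists>p. \<forall>k. h (traj f p x0 k) (p (traj f p x0 k)) \<le> 0}"

definition Pol :: "('x \<Rightarrow> 'u \<Rightarrow> 'x) \<Rightarrow> ('x \<Rightarrow> 'u \<Rightarrow> real^'c) \<Rightarrow> ('x \<Rightarrow> 'u) set" where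
  "Pol f h = {p. \<forall>x0\<in>X0set f h. \<forall>k. h (traj f p x0 k) (p (traj f p x0 k)) \<le> 0}"

definition cost_seq :: "('x \<Rightarrow> 'u \<Rightarrow> 'x) \<Rightarrow> ('x \<Rightarrow> 'u \<Rightarrow> real) \<Rightarrow> real \<Rightarrow> ('x \<Rightarrow> 'u) \<Rightarrow> 'x \<Rightarrow> nat \<Rightarrow> real" where
  "cost_seq f L \<gamma> p x0 k = \<gamma> ^ k * L (traj f p x0 k) (p (traj f p x0 k))"

definition cost :: "('x \<Rightarrow> 'u \<Rightarrow> 'x) \<Rightarrow> ('x \<Rightarrow> 'u \<Rightarrow> real) \<Rightarrow> real \<Rightarrow> ('x \<Rightarrow> 'u) \<Rightarrow> 'x \<Rightarrow> real" where
  "cost f L \<gamma> p x0 = (\<Sum>k. cost_seq f L \<gamma> p x0 k)"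

text \<open>Optimal value function V_star^gamma (infimum over admissible policies with
  convergent cost; under the well-posedness assumption below this is a minimum).\<close>
definition Vstar :: "('x \<Rightarrow> 'u \<Rightarrow> 'x) \<Rightarrow> ('x \<Rightarrow> 'u \<Rightarrow> real^'c) \<Rightarrow> ('x \<Rightarrow> 'u \<Rightarrow> real) \<Rightarrow> real \<Rightarrow> 'x \<Rightarrow> real" where
  "Vstar f h L \<gamma> x0 = Inf {cost f L \<gamma> p x0 | p. p \<in> Pol f h \<and> summable (cost_seq f L \<gamma> p x0)}"

definition optimal_policy :: "('x \<Rightarrow> 'u \<Rightarrow> 'x) \<Rightarrow> ('x \<Rightarrow> 'u \<Rightarrow> real^'c) \<Rightarrow> ('x \<Rightarrow> 'u \<Rightarrow> real) \<Rightarrow> real \<Rightarrow> ('x \<Rightarrow> 'u) \<Rightarrow> bool" where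
  "optimal_policy f h L \<gamma> ps \<longleftrightarrow> ps \<in> Pol f h \<and>
     (\<forall>x0\<in>X0set f h. summable (cost_seq f L \<gamma> ps x0) \<and>
        (\<forall>p\<in>Pol f h. summable (cost_seq f L \<gamma> p x0) \<longrightarrow> cost f L \<gamma> ps x0 \<le> cost f L \<gamma> p x0))"

definition classK :: "(real \<Rightarrow> real) \<Rightarrow> bool" where
  "classK \<rho> \<longleftrightarrow> continuous_on {0..} \<rho> \<and> strict_mono_on {0..} \<rho> \<and> \<rho> 0 = 0 \<and> (\<forall>r\<ge>0. \<rho> r \<ge> 0)"

end

theory Submission
  imports Defs
begin

text \<open>At a steady state the storage terms of SDSD (ii) cancel, so the modified cost
  L + (\<gamma> - 1) V \<circ> f is bounded below by \<rho> \<ge> 0 on all feasible steady states.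
  At (xs, us) it equals (\<gamma> - 1) V xs, which is \<le> 0 because SDSD (i) makes every
  discounted cost from xs telescope to at least -\<lambda> xs = 0.\<close>

lemma discounted_sum_ge_neg_storage:
  fixes c lam :: "nat \<Rightarrow> real"
  assumes "0 \<le> \<gamma>" "\<gamma> < 1"
    and dissipation: "\<And>k. \<gamma> * lam (Suc k) - lam k \<le> c k"
    and bound: "\<And>k. \<bar>lam k\<bar> \<le> B"
    and "summable (\<lambda>k. \<gamma> ^ k * c k)"
  shows "- lam 0 \<le> (\<Sum>k. \<gamma> ^ k * c k)"
proof -
  have partial: "- (\<gamma> ^ N * B) - lam 0 \<le> (\<Sum>k<N. \<gamma> ^ k * c k)" for N
  proof -
    have "\<gamma> ^ Suc k * lam (Suc k) - \<gamma> ^ k * lam k \<le> \<gamma> ^ k * c k" for k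
      using mult_left_mono[OF dissipation[of k], of "\<gamma> ^ k"] \<open>0 \<le> \<gamma>\<close>
      by (simp add: algebra_simps)
    then have "(\<Sum>k<N. \<gamma> ^ Suc k * lam (Suc k) - \<gamma> ^ k * lam k) \<le> (\<Sum>k<N. \<gamma> ^ k * c k)"
      by (rule sum_mono)
    moreover have "(\<Sum>k<N. \<gamma> ^ Suc k * lam (Suc k) - \<gamma> ^ k * lam k) = \<gamma> ^ N * lam N - lam 0"
      using sum_lessThan_telescope[where f = "\<lambda>k. \<gamma> ^ k * lam k" and m = N] by simp
    moreover have "- (\<gamma> ^ N * B) \<le> \<gamma> ^ N * lam N"
      using mult_left_mono[of "- B" "lam N" "\<gamma> ^ N"] bound[of N] \<open>0 \<le> \<gamma>\<close> by simp
    ultimately show ?thesis by linarith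
  qed
  have "(\<lambda>N. - (\<gamma> ^ N * B) - lam 0) \<longlonglongrightarrow> - (0 * B) - lam 0"
    using assms(1,2) by (intro tendsto_intros LIMSEQ_power_zero) auto
  moreover have "(\<lambda>N. \<Sum>k<N. \<gamma> ^ k * c k) \<longlonglongrightarrow> (\<Sum>k. \<gamma> ^ k * c k)"
    using \<open>summable _\<close> by (rule summable_LIMSEQ)
  ultimately have "- (0 * B) - lam 0 \<le> (\<Sum>k. \<gamma> ^ k * c k)"
    using partial by (blast intro: LIMSEQ_le)
  then show ?thesis
    by simp
qed

lemma cost_ge_neg_storage:
  assumes "0 \<le> \<gamma>" "\<gamma> < 1"
    and diss: "\<forall>(x, u)\<in>Zset h. \<gamma> * lam (f x u) - lam x \<le> L x u"
    and lam_bounded: "bounded (lam ` fst ` Zset h)"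
    and x0: "x0 \<in> X0set f h" and p: "p \<in> Pol f h"
    and "summable (cost_seq f L \<gamma> p x0)"
  shows "- lam x0 \<le> cost f L \<gamma> p x0"
proof -
  define t where "t = traj f p x0"
  have tZ: "(t k, p (t k)) \<in> Zset h" for k
    using p x0 unfolding Pol_def Zset_def t_def by auto
  obtain B where B: "\<And>y. y \<in> fst ` Zset h \<Longrightarrow> \<bar>lam y\<bar> \<le> B"
    using lam_bounded by (auto simp: bounded_real)
  have "- lam (t 0) \<le> (\<Sum>k. \<gamma> ^ k * L (t k) (p (t k)))"
  proof (rule discounted_sum_ge_neg_storage[OF assms(1,2)])
    show "\<gamma> * lam (t (Suc k)) - lam (t k) \<le> L (t k) (p (t k))" for k
      using diss tZ[of k] by (auto simp: t_def)
    show "\<bar>lam (t k)\<bar> \<le> B" for k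
      using B tZ[of k] by force
    show "summable (\<lambda>k. \<gamma> ^ k * L (t k) (p (t k)))"
      using \<open>summable _\<close> by (simp add: cost_seq_def[abs_def] t_def)
  qed
  then show ?thesis
    by (simp add: cost_def cost_seq_def[abs_def] t_def)
qed

lemma Vstar_ge_neg_storage:
  assumes "0 \<le> \<gamma>" "\<gamma> < 1"
    and diss: "\<forall>(x, u)\<in>Zset h. \<gamma> * lam (f x u) - lam x \<le> L x u"
    and lam_bounded: "bounded (lam ` fst ` Zset h)"
    and opt: "optimal_policy f h L \<gamma> ps"
    and x0: "x0 \<in> X0set f h"
  shows "- lam x0 \<le> Vstar f h L \<gamma> x0"
  unfolding Vstar_def
proof (rule cInf_greatest)
  show "{cost f L \<gamma> p x0 |p. p \<in> Pol f h \<and> summable (cost_seq f L \<gamma> p x0)} \<noteq> {}"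
    using opt x0 unfolding optimal_policy_def by blast
qed (use cost_ge_neg_storage[OF assms(1-4) x0] in blast)

lemma traj_const_at_steady_state:
  assumes "x = f x u"
  shows "traj f (\<lambda>_. u) x k = x"
  by (induction k) (use assms in auto)

lemma steady_state_in_X0set:
  assumes "(x, u) \<in> Zset h" "x = f x u"
  shows "x \<in> X0set f h"
  using assms traj_const_at_steady_state[where f = f, OF assms(2)]
  by (auto simp: X0set_def Zset_def intro!: exI[of _ "\<lambda>_. u"])

lemma modified_cost_nonneg_at_steady_state:
  fixes lam V r :: "'x \<Rightarrow> real" and \<gamma> :: real
  assumes sdsd2: "\<forall>(x, u)\<in>Zset h. f x u \<in> X0set f h \<longrightarrow>
      r x \<le> L x u + lam x - lam (f x u) + (\<gamma> - 1) * V (f x u)"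
    and "0 \<le> r x" and steady: "(x, u) \<in> Zset h" "x = f x u"
  shows "0 \<le> L x u + (\<gamma> - 1) * V (f x u)"
proof -
  have "r x \<le> L x u + lam x - lam (f x u) + (\<gamma> - 1) * V (f x u)"
    using sdsd2 steady(1) steady_state_in_X0set[where f = f, OF steady] by (auto simp flip: steady(2))
  moreover have "lam (f x u) = lam x"
    by (simp flip: steady(2))
  ultimately show ?thesis
    using \<open>0 \<le> r x\<close> by linarith
qed

theorem theorem4:
  fixes f :: "real^'n \<Rightarrow> real^'m \<Rightarrow> real^'n"
    and L :: "real^'n \<Rightarrow> real^'m \<Rightarrow> real"
    and h :: "real^'n \<Rightarrow> real^'m \<Rightarrow> real^'c"
    and \<gamma> :: real and xs :: "real^'n" and us :: "real^'m"
  defines "V \<equiv> Vstar f h L \<gamma>"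
  assumes gamma: "0 < \<gamma>" "\<gamma> < 1"
    and steady: "xs = f xs us"
    and xs_feas: "(xs, us) \<in> Zset h"
    and normal: "L xs us = 0"
    and opt: "\<exists>ps. optimal_policy f h L \<gamma> ps"
    \<comment> \<open>A1\<close>
    and A1: "compact (Zset h)" "compact (X0set f h)"
    \<comment> \<open>A2 (SDSD)\<close>
    and A2: "\<exists>lam :: real^'n \<Rightarrow> real. \<exists>\<rho>.
       isCont lam xs \<and> (\<forall>S. bounded S \<longrightarrow> bounded (lam ` S)) \<and> lam xs = 0 \<and> classK \<rho> \<and>
       (\<forall>(x, u)\<in>Zset h. L x u + lam x - \<gamma> * lam (f x u) \<ge> \<rho> (norm (x - xs))) \<and>
       (\<forall>(x, u)\<in>Zset h. f x u \<in> X0set f h \<longrightarrow>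
          L x u + lam x - lam (f x u) + (\<gamma> - 1) * V (f x u) \<ge> \<rho> (norm (x - xs)))"
    \<comment> \<open>A3\<close>
    and A3: "continuous (at xs within X0set f h) V" "bounded (V ` X0set f h)"
  shows "\<forall>(x, u)\<in>Zset h. x = f x u \<longrightarrow>
           L xs us + (\<gamma> - 1) * V (f xs us) \<le> L x u + (\<gamma> - 1) * V (f x u)"
proof -
  obtain lam :: "real^'n \<Rightarrow> real" and \<rho> where
    lam_bounded: "\<forall>S. bounded S \<longrightarrow> bounded (lam ` S)" and lam_xs: "lam xs = 0"
    and K: "classK \<rho>"
    and sdsd1: "\<forall>(x, u)\<in>Zset h. L x u + lam x - \<gamma> * lam (f x u) \<ge> \<rho> (norm (x - xs))"
    and sdsd2: "\<forall>(x, u)\<in>Zset h. f x u \<in> X0set f h \<longrightarrow>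
          L x u + lam x - lam (f x u) + (\<gamma> - 1) * V (f x u) \<ge> \<rho> (norm (x - xs))"
    using A2 by blast
  have \<rho>_nonneg: "\<rho> (norm (x - xs)) \<ge> 0" for x
    using K unfolding classK_def by simp
  obtain ps where ps: "optimal_policy f h L \<gamma> ps"
    using opt by blast
  have diss: "\<forall>(x, u)\<in>Zset h. \<gamma> * lam (f x u) - lam x \<le> L x u"
  proof (intro ballI, clarify)
    fix x u assume "(x, u) \<in> Zset h"
    then have "\<rho> (norm (x - xs)) \<le> L x u + lam x - \<gamma> * lam (f x u)"
      using sdsd1 by blast
    then show "\<gamma> * lam (f x u) - lam x \<le> L x u"
      using \<rho>_nonneg[of x] by linarith
  qed
  have lam_Z: "bounded (lam ` fst ` Zset h)"
    using lam_bounded compact_imp_bounded[OF A1(1)] by (simp add: bounded_fst)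
  have "0 \<le> V xs"
    using Vstar_ge_neg_storage[OF less_imp_le[OF gamma(1)] gamma(2) diss lam_Z ps
        steady_state_in_X0set[where f = f, OF xs_feas steady]]
    by (simp add: V_def lam_xs)
  then have at_xs: "L xs us + (\<gamma> - 1) * V (f xs us) \<le> 0"
    using normal gamma(2) by (simp add: mult_nonpos_nonneg flip: steady)
  show ?thesis
  proof (intro ballI impI, clarify)
    fix x u assume "(x, u) \<in> Zset h" "x = f x u"
    then show "L xs us + (\<gamma> - 1) * V (f xs us) \<le> L x u + (\<gamma> - 1) * V (f x u)"
      using at_xs modified_cost_nonneg_at_steady_state[OF sdsd2 \<rho>_nonneg] by (meson order_trans)
  qed
qed

end
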